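(* Let $\phi\in\mathcal{BF}$ and set $\beta:=-\omega_0^{\phi'}$. Assume that the L\'evy measure of $\phi$ has a density $\mu:(0,\infty)\to(0,\infty)$ such that $t\mapsto e^{\beta t}\mu(t)$ is non-increasing, and let $\phi_e$ be the extension of $\phi$ to $(-\beta,\infty)$. (i) There is a constant $c_1>0$ such that $\mu(t)\le -c_1 t^{-3}\phi_e''(t^{-1}-\beta)e^{-\beta t}$ for all $t>0$. (ii) If there exist constants $\theta>0$, $0\le\Lambda_1<\Lambda_2\le\infty$ and $\gamma>0$ such that \[ \frac{\phi_e''(\lambda x-\beta)}{\phi_e''(\lambda-\beta)}\le\theta x^{-\gamma}\quad\text{for all } x\ge1,\ \lambda\in(\Lambda_1,\Lambda_2), \] then there exist constants $c_2>0$ and $\delta\in(0,1)$ such that $\mu(t)\ge -c_2 t^{-3}\phi_e''(t^{-1}-\beta)e^{-\beta t}$ for all $t\in(\delta\Lambda_2^{-1},\delta\Lambda_1^{-1})$ (conventions $1/0=\infty$, $1/\infty=0$).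
   Context: A function $\phi:(0,\infty)\to[0,\infty)$ is a Bernstein function, $\phi\in\mathcal{BF}$, if it is $C^\infty$ and $(-1)^{n-1}\phi^{(n)}(\lambda)\ge0$ for all $n\in\mathbb{N}$, $\lambda>0$. Every $\phi\in\mathcal{BF}$ has a unique representation $\phi(\lambda)=a+b\lambda+\int_{(0,\infty)}(1-e^{-\lambda t})\mu(dt)$ with $a,b\ge0$ and a measure $\mu$ on $(0,\infty)$ with $\int(1\wedge t)\mu(dt)<\infty$, called the L\'evy measure of $\phi$. Then $\phi'$ is completely monotone ($C^\infty$ with $(-1)^n(\phi')^{(n)}\ge0$). For a completely monotone $f$ with $f^{(n)}(0+):=\lim_{\lambda\to0+}f^{(n)}(\lambda)\in[-\infty,\infty]$: if all $f^{(n)}(0+)$ are finite, $\omega_0^f:=\inf\{\lambda\in\mathbb{R}:\sum_{n\ge0}\frac{f^{(n)}(0+)}{n!}\lambda^n\text{ converges}\}$, otherwise $\omega_0^f:=0$. With $\beta:=-\omega_0^{\phi'}\in[0,\infty]$, the extension $\phi_e:(-\beta,\infty)\to\mathbb{R}$ is $\phi_e=\phi$ on $(0,\infty)$ and, if $\beta>0$, $\phi_e(\lambda)=\sum_{n\ge0}\frac{\phi^{(n)}(0+)}{n!}\lambda^n$ for $\lambda\in(-\beta,0]$ (all $\phi^{(n)}(0+):=\lim_{\lambda\to0+}\phi^{(n)}(\lambda)$ are then finite); $\phi_e$ is $C^\infty$ on $(-\beta,\infty)$. *)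

theory Defs
  imports "HOL-Analysis.Analysis"
begin

definition bernstein_function :: "(real \<Rightarrow> real) \<Rightarrow> bool" where
  "bernstein_function \<phi> \<longleftrightarrow>
     (\<forall>x>0. \<phi> x \<ge> 0) \<and>
     (\<forall>n. \<forall>x>0. ((deriv ^^ n) \<phi> has_real_derivative (deriv ^^ Suc n) \<phi> x) (at x)) \<and>
     (\<forall>n\<ge>1. \<forall>x>0. (-1) ^ (n - 1) * (deriv ^^ n) \<phi> x \<ge> 0)"

text \<open>The Levy measure of phi has density mu on (0,\<infinity>): Levy-Khintchine
  representation phi(l) = a + b l + int_(0,\<infinity>) (1 - e^(-l t)) mu(t) dt
  with a, b \<ge> 0, mu \<ge> 0 and int (1 \<and> t) mu(t) dt < \<infinity>.\<close>
definition levy_density :: "(real \<Rightarrow> real) \<Rightarrow> (real \<Rightarrow> real) \<Rightarrow> bool" where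
  "levy_density \<phi> \<mu> \<longleftrightarrow>
     (\<forall>t>0. \<mu> t \<ge> 0) \<and>
     set_integrable lborel {0<..} (\<lambda>t. min 1 t * \<mu> t) \<and>
     (\<exists>a b. a \<ge> 0 \<and> b \<ge> 0 \<and>
        (\<forall>l>0. \<phi> l = a + b * l + (LINT t:{0<..}|lborel. (1 - exp (- l * t)) * \<mu> t)))"

definition deriv_at_0 :: "(real \<Rightarrow> real) \<Rightarrow> nat \<Rightarrow> real" where
  "deriv_at_0 f n = Lim (at_right 0) ((deriv ^^ n) f)"

definition all_derivs_finite_at_0 :: "(real \<Rightarrow> real) \<Rightarrow> bool" where
  "all_derivs_finite_at_0 f \<longleftrightarrow> (\<forall>n. \<exists>L. ((deriv ^^ n) f \<longlongrightarrow> L) (at_right 0))"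

definition omega0 :: "(real \<Rightarrow> real) \<Rightarrow> ereal" where
  "omega0 f = (if all_derivs_finite_at_0 f
      then Inf (ereal ` {l. summable (\<lambda>n. deriv_at_0 f n / fact n * l ^ n)})
      else 0)"

text \<open>The extension phi_e of phi to (-beta,\<infinity>) (beta real); values for
  arguments \<le> -beta are irrelevant.\<close>
definition phi_ext :: "(real \<Rightarrow> real) \<Rightarrow> real \<Rightarrow> real \<Rightarrow> real" where
  "phi_ext \<phi> \<beta> l = (if l > 0 \<or> \<beta> \<le> 0 then \<phi> l
      else (\<Sum>n. deriv_at_0 \<phi> n / fact n * l ^ n))"

end

theory Submission
  imports Defs "HOL-Probability.Distributions"
begin

text \<open>By the L\'evy-Khintchine representation,
  \<open>\<phi>\<^sub>e(l) = a + b l + \<integral> (1 - e^(-l t)) \<mu>(t) dt\<close> on \<open>(-\<beta>, \<infinity>)\<close>. The Taylor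
  coefficients of \<open>\<phi>'\<close> at \<open>0+\<close> dominate the Laplace moments of \<open>\<mu>\<close>, so convergence of that
  series up to \<open>-\<beta>\<close> makes \<open>\<integral> t e^(r t) \<mu>(t) dt\<close> finite for \<open>r < \<beta>\<close>, and the Taylor series
  of \<open>\<phi>\<close> then sums to the integral formula. Hence
  \<open>-\<phi>\<^sub>e''(l - \<beta>) = \<integral> s^2 e^(-l s) \<nu>(s) ds\<close> with \<open>\<nu>(s) = e^(\<beta> s) \<mu>(s)\<close> non-increasing.
  For \<open>l = 1/t\<close>, restricting this integral to \<open>(t/2, t]\<close> bounds it below by a multiple of
  \<open>t^3 \<nu>(t)\<close>, which is (i). For (ii), take \<open>l = \<delta>/t\<close> and split the integral at \<open>t\<close>: the
  part below \<open>t\<close> is at most \<open>e^((x - 1) \<delta>)\<close> times the integral at \<open>x l\<close>, which the ratio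
  hypothesis makes a small fraction of the whole for large \<open>x\<close>, and the part above \<open>t\<close> is at
  most \<open>2 \<nu>(t) / l^3\<close>.\<close>

lemma difference_quotient_bound:
  fixes f g :: "real \<Rightarrow> real"
  assumes "h \<in> ball 0 \<eta>" "h \<noteq> 0"
    and deriv: "\<And>l. l \<in> ball l0 \<eta> \<Longrightarrow> (f has_real_derivative g l) (at l)"
    and bound: "\<And>l. l \<in> ball l0 \<eta> \<Longrightarrow> \<bar>g l\<bar> \<le> B"
  shows "\<bar>(f (l0 + h) - f l0) / h\<bar> \<le> B"
proof -
  have "norm (f (l0 + h) - f l0) \<le> B * norm ((l0 + h) - l0)"
  proof (rule field_differentiable_bound[of "ball l0 \<eta>" f g])
    show "(f has_field_derivative g z) (at z within ball l0 \<eta>)" if "z \<in> ball l0 \<eta>" for z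
      using deriv[OF that] by (rule has_field_derivative_at_within)
    show "l0 \<in> ball l0 \<eta>" "l0 + h \<in> ball l0 \<eta>" using assms(1) by (auto simp: dist_norm)
  qed (use bound in auto)
  then show ?thesis using assms(2) by (simp add: divide_le_eq abs_divide)
qed

lemma tendsto_integral_difference_quotient:
  fixes f g :: "real \<Rightarrow> real \<Rightarrow> real" and w :: "real \<Rightarrow> real"
  assumes "\<eta> > 0"
    and integrable: "\<And>l. l \<in> ball l0 \<eta> \<Longrightarrow> integrable lborel (f l)"
    and measurable: "g l0 \<in> borel_measurable lborel"
    and integrable_bound: "integrable lborel w"
    and deriv: "\<And>l t. l \<in> ball l0 \<eta> \<Longrightarrow> ((\<lambda>l. f l t) has_real_derivative g l t) (at l)"
    and bound: "\<And>l t. l \<in> ball l0 \<eta> \<Longrightarrow> \<bar>g l t\<bar> \<le> w t"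
    and X: "\<forall>i. X i \<in> ball 0 \<eta> - {0}" "X \<longlonglongrightarrow> 0"
  shows "(\<lambda>i. integral\<^sup>L lborel (\<lambda>t. (f (l0 + X i) t - f l0 t) / X i)) \<longlonglongrightarrow> integral\<^sup>L lborel (g l0)"
proof (rule integral_dominated_convergence[where w=w])
  have l0: "l0 \<in> ball l0 \<eta>" using \<open>\<eta> > 0\<close> by simp
  have X_ball: "l0 + X i \<in> ball l0 \<eta>" for i using X by (auto simp: dist_norm)
  show "(\<lambda>t. (f (l0 + X i) t - f l0 t) / X i) \<in> borel_measurable lborel" for i
    using integrable[OF X_ball[of i]] integrable[OF l0] by auto
  show "AE t in lborel. (\<lambda>i. (f (l0 + X i) t - f l0 t) / X i) \<longlonglongrightarrow> g l0 t"
  proof (rule AE_I2)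
    fix t
    have "((\<lambda>h. (f (l0 + h) t - f l0 t) / h) \<longlongrightarrow> g l0 t) (at 0)"
      using deriv[OF l0, of t] unfolding DERIV_def .
    then show "(\<lambda>i. (f (l0 + X i) t - f l0 t) / X i) \<longlonglongrightarrow> g l0 t"
      unfolding tendsto_at_iff_sequentially[where s=UNIV] using X by (auto simp: comp_def)
  qed
  show "AE t in lborel. norm ((f (l0 + X i) t - f l0 t) / X i) \<le> w t" for i
  proof (rule AE_I2)
    fix t
    have "\<bar>(f (l0 + X i) t - f l0 t) / X i\<bar> \<le> w t"
      by (rule difference_quotient_bound[where \<eta>=\<eta> and f="\<lambda>l. f l t" and g="\<lambda>l. g l t"])
         (use X deriv bound in auto)
    then show "norm ((f (l0 + X i) t - f l0 t) / X i) \<le> w t" by simp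
  qed
qed (use measurable integrable_bound in auto)

lemma has_real_derivative_integral_lborel:
  fixes f g :: "real \<Rightarrow> real \<Rightarrow> real" and w :: "real \<Rightarrow> real"
  assumes "\<eta> > 0"
    and integrable: "\<And>l. l \<in> ball l0 \<eta> \<Longrightarrow> integrable lborel (f l)"
    and "g l0 \<in> borel_measurable lborel" "integrable lborel w"
    and "\<And>l t. l \<in> ball l0 \<eta> \<Longrightarrow> ((\<lambda>l. f l t) has_real_derivative g l t) (at l)"
    and "\<And>l t. l \<in> ball l0 \<eta> \<Longrightarrow> \<bar>g l t\<bar> \<le> w t"
  shows "((\<lambda>l. integral\<^sup>L lborel (f l)) has_real_derivative integral\<^sup>L lborel (g l0)) (at l0)"
proof -
  have l0: "l0 \<in> ball l0 \<eta>" using \<open>\<eta> > 0\<close> by simp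
  have "((\<lambda>h. (integral\<^sup>L lborel (f (l0 + h)) - integral\<^sup>L lborel (f l0)) / h)
          \<longlongrightarrow> integral\<^sup>L lborel (g l0)) (at 0 within ball 0 \<eta>)"
  proof (subst tendsto_at_iff_sequentially, intro allI impI)
    fix X :: "nat \<Rightarrow> real" assume X: "\<forall>i. X i \<in> ball 0 \<eta> - {0}" "X \<longlonglongrightarrow> 0"
    have X_ball: "l0 + X i \<in> ball l0 \<eta>" for i using X by (auto simp: dist_norm)
    have quotient_eq: "(integral\<^sup>L lborel (f (l0 + X i)) - integral\<^sup>L lborel (f l0)) / X i
        = integral\<^sup>L lborel (\<lambda>t. (f (l0 + X i) t - f l0 t) / X i)" for i
      using integrable[OF X_ball[of i]] integrable[OF l0] by simp
    show "((\<lambda>h. (integral\<^sup>L lborel (f (l0 + h)) - integral\<^sup>L lborel (f l0)) / h) \<circ> X)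
        \<longlonglongrightarrow> integral\<^sup>L lborel (g l0)"
      unfolding comp_def quotient_eq by (rule tendsto_integral_difference_quotient[OF assms X])
  qed
  then have "((\<lambda>h. (integral\<^sup>L lborel (f (l0 + h)) - integral\<^sup>L lborel (f l0)) / h)
      \<longlongrightarrow> integral\<^sup>L lborel (g l0)) (at 0)"
    using at_within_open[of 0 "ball 0 \<eta>"] \<open>\<eta> > 0\<close> by (metis centre_in_ball open_ball)
  then show ?thesis unfolding DERIV_def .
qed

lemma summable_integral_of_nonneg_sums:
  fixes f :: "nat \<Rightarrow> 'a \<Rightarrow> real"
  assumes integrable: "\<And>i. integrable M (f i)" and nonneg: "\<And>i x. 0 \<le> f i x"
    and sums: "\<And>x. (\<lambda>i. f i x) sums g x" and "integrable M g"
  shows "summable (\<lambda>i. integral\<^sup>L M (f i))"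
proof (rule bounded_imp_summable)
  show "0 \<le> integral\<^sup>L M (f i)" for i by (simp add: nonneg)
  show "(\<Sum>i\<le>n. integral\<^sup>L M (f i)) \<le> integral\<^sup>L M g" for n
  proof -
    have "(\<Sum>i\<le>n. integral\<^sup>L M (f i)) = integral\<^sup>L M (\<lambda>x. \<Sum>i\<le>n. f i x)"
      using integrable by (simp add: integral_sum)
    also have "\<dots> \<le> integral\<^sup>L M g"
    proof (rule integral_mono)
      fix x
      have "(\<Sum>i\<le>n. f i x) \<le> (\<Sum>i. f i x)"
        using nonneg by (intro sum_le_suminf sums_summable[OF sums]) auto
      then show "(\<Sum>i\<le>n. f i x) \<le> g x" using sums_unique[OF sums] by simp
    qed (use integrable \<open>integrable M g\<close> in auto)
    finally show ?thesis .
  qed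
qed

lemma nonneg_series_integral:
  fixes f :: "nat \<Rightarrow> 'a \<Rightarrow> real"
  assumes integrable: "\<And>i. integrable M (f i)" and nonneg: "\<And>i x. 0 \<le> f i x"
    and sums: "\<And>x. (\<lambda>i. f i x) sums g x" and summable: "summable (\<lambda>i. integral\<^sup>L M (f i))"
  shows "integrable M g" "(\<lambda>i. integral\<^sup>L M (f i)) sums integral\<^sup>L M g"
proof -
  have g: "g = (\<lambda>x. \<Sum>i. f i x)" using sums by (auto simp: fun_eq_iff sums_iff)
  have AE_summable: "AE x in M. summable (\<lambda>i. norm (f i x))"
    by (intro AE_I2) (simp add: abs_of_nonneg nonneg sums_summable[OF sums])
  have summable_norm: "summable (\<lambda>i. \<integral>x. norm (f i x) \<partial>M)"
    using summable by (simp add: abs_of_nonneg nonneg)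
  show "integrable M g"
    unfolding g by (rule integrable_suminf[OF integrable AE_summable summable_norm])
  show "(\<lambda>i. integral\<^sup>L M (f i)) sums integral\<^sup>L M g"
    unfolding g by (rule sums_integral[OF integrable AE_summable summable_norm])
qed

lemma tendsto_deriv_at_0:
  assumes "all_derivs_finite_at_0 f"
  shows "((deriv ^^ n) f \<longlongrightarrow> deriv_at_0 f n) (at_right 0)"
proof -
  obtain L where "((deriv ^^ n) f \<longlongrightarrow> L) (at_right 0)"
    using assms unfolding all_derivs_finite_at_0_def by blast
  moreover from this have "deriv_at_0 f n = L"
    unfolding deriv_at_0_def by (intro tendsto_Lim) auto
  ultimately show ?thesis by simp
qed

lemma power_div_fact_le_exp:
  assumes "0 \<le> (x::real)"
  shows "x ^ n / fact n \<le> exp x"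
proof -
  have "x ^ n / fact n \<le> (\<Sum>i\<le>n. x ^ i / fact i)"
    by (rule member_le_sum) (use assms in auto)
  also have "\<dots> \<le> exp x"
    using assms summable_exp_generic[of x]
    by (auto simp: exp_def divide_inverse ac_simps intro!: sum_le_suminf)
  finally show ?thesis .
qed

lemma power_le_fact_mult_exp:
  assumes "0 \<le> (t::real)" "0 < c"
  shows "t ^ n \<le> fact n / c ^ n * exp (c * t)"
proof -
  have "(c * t) ^ n / fact n \<le> exp (c * t)" using assms by (intro power_div_fact_le_exp) auto
  then show ?thesis using assms by (simp add: field_simps power_mult_distrib)
qed

lemma exists_powr_threshold:
  assumes "0 < (\<theta>::real)" "0 < \<gamma>"
  shows "\<exists>x\<ge>1. \<theta> * x powr (- \<gamma>) \<le> 1 / 4"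
proof -
  define x where "x = max 1 ((4 * \<theta>) powr (1 / \<gamma>))"
  have "1 \<le> x" by (simp add: x_def)
  have "4 * \<theta> = ((4 * \<theta>) powr (1 / \<gamma>)) powr \<gamma>"
    using assms by (simp add: powr_powr)
  also have "\<dots> \<le> x powr \<gamma>"
    using assms(2) by (intro powr_mono2) (auto simp: x_def)
  finally have "\<theta> * x powr (- \<gamma>) \<le> 1 / 4"
    using \<open>1 \<le> x\<close> by (simp add: powr_minus inverse_eq_divide field_simps)
  then show ?thesis using \<open>1 \<le> x\<close> by blast
qed

lemma erlang_density_2_integral:
  assumes "0 < l"
  shows "integrable lborel (erlang_density 2 l)" "integral\<^sup>L lborel (erlang_density 2 l) = 1"
proof -
  have "(\<integral>\<^sup>+ s. ennreal (erlang_density 2 l s * s ^ 0) \<partial>lborel) = fact (2 + 0) / (fact 2 * l ^ 0)"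
    by (rule nn_integral_erlang_ith_moment[OF assms])
  then have "(\<integral>\<^sup>+ s. ennreal (erlang_density 2 l s) \<partial>lborel) = ennreal 1" by simp
  then have "integrable lborel (erlang_density 2 l) \<and> integral\<^sup>L lborel (erlang_density 2 l) = 1"
    by (rule nn_integral_eq_integrable[THEN iffD1, rotated 3]) (use assms in auto)
  then show "integrable lborel (erlang_density 2 l)" "integral\<^sup>L lborel (erlang_density 2 l) = 1"
    by auto
qed

locale positive_levy_density =
  fixes \<mu> :: "real \<Rightarrow> real"
  assumes density_pos: "\<And>t. 0 < t \<Longrightarrow> 0 < \<mu> t"
    and integrable_min_density: "set_integrable lborel {0<..} (\<lambda>t. min 1 t * \<mu> t)"
begin

definition dens :: "real \<Rightarrow> real" where
  "dens t = indicator {0<..} t * \<mu> t"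

definition laplace_moment :: "nat \<Rightarrow> real \<Rightarrow> real" where
  "laplace_moment k l = integral\<^sup>L lborel (\<lambda>t. dens t * (t ^ k * exp (- l * t)))"

definition levy_integral :: "real \<Rightarrow> real" where
  "levy_integral l = integral\<^sup>L lborel (\<lambda>t. dens t * (1 - exp (- l * t)))"

definition exp_integrable :: "real \<Rightarrow> bool" where
  "exp_integrable \<rho> \<longleftrightarrow> (\<forall>r<\<rho>. integrable lborel (\<lambda>t. dens t * (t * exp (r * t))))"

lemma dens_nonneg: "0 \<le> dens t"
  using density_pos[of t] by (auto simp: dens_def indicator_def)

lemma dens_eq_0: "t \<le> 0 \<Longrightarrow> dens t = 0"
  by (simp add: dens_def)

lemma integrable_dens_min: "integrable lborel (\<lambda>t. dens t * min 1 t)"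
proof -
  have "(\<lambda>t. indicator {0<..} t *\<^sub>R (min 1 t * \<mu> t)) = (\<lambda>t. dens t * min 1 t)"
    by (auto simp: dens_def fun_eq_iff)
  then show ?thesis using integrable_min_density unfolding set_integrable_def by simp
qed

lemma dens_measurable [measurable]: "dens \<in> borel_measurable lborel"
proof -
  have "(\<lambda>t. (dens t * min 1 t) / min 1 t) \<in> borel_measurable lborel"
    using integrable_dens_min by measurable
  moreover have "(\<lambda>t. (dens t * min 1 t) / min 1 t) = dens"
    by (auto simp: fun_eq_iff dens_def indicator_def)
  ultimately show ?thesis by simp
qed

lemma integrable_dens_mult_bound:
  assumes "integrable lborel (\<lambda>t. dens t * h t)" "f \<in> borel_measurable lborel"
    and "\<And>t. 0 < t \<Longrightarrow> \<bar>f t\<bar> \<le> C * h t"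
  shows "integrable lborel (\<lambda>t. dens t * f t)"
proof (rule Bochner_Integration.integrable_bound)
  show "integrable lborel (\<lambda>t. C * (dens t * h t))" using assms(1) by simp
  show "(\<lambda>t. dens t * f t) \<in> borel_measurable lborel" using assms(2) by measurable
  show "AE t in lborel. norm (dens t * f t) \<le> norm (C * (dens t * h t))"
  proof (rule AE_I2)
    fix t show "norm (dens t * f t) \<le> norm (C * (dens t * h t))"
    proof (cases "t > 0")
      case True
      have "norm (dens t * f t) = dens t * \<bar>f t\<bar>" using dens_nonneg[of t] by (simp add: abs_mult)
      also have "\<dots> \<le> dens t * (C * h t)"
        using assms(3)[OF True] dens_nonneg[of t] by (simp add: mult_left_mono)
      also have "\<dots> \<le> norm (C * (dens t * h t))" by (metis abs_ge_self mult.left_commute real_norm_def)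
      finally show ?thesis .
    qed (simp add: dens_eq_0)
  qed
qed

lemma exp_integrable_0: "exp_integrable 0"
  unfolding exp_integrable_def
proof (intro allI impI)
  fix r :: real assume r: "r < 0"
  show "integrable lborel (\<lambda>t. dens t * (t * exp (r * t)))"
  proof (rule integrable_dens_mult_bound[OF integrable_dens_min, where C="max 1 (1 / (-r))"])
    fix t :: real assume t: "0 < t"
    have "t * exp (r * t) \<le> t"
      using r t by (simp add: mult_nonpos_nonneg mult_left_le)
    moreover have "t * exp (r * t) \<le> 1 / (-r)"
    proof -
      have "t * exp (r * t) \<le> (fact 1 / (-r) ^ 1 * exp ((-r) * t)) * exp (r * t)"
        using power_le_fact_mult_exp[of t "-r" 1] t r by (intro mult_right_mono) auto
      also have "\<dots> = 1 / (-r)" by (simp add: exp_add[symmetric])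
      finally show ?thesis .
    qed
    ultimately show "\<bar>t * exp (r * t)\<bar> \<le> max 1 (1 / (-r)) * min 1 t"
      using t by (auto simp: min_def max_def mult_right_mono intro: order_trans)
  qed measurable
qed

lemma integrable_laplace_moment:
  assumes "exp_integrable \<rho>" "1 \<le> k" "-\<rho> < l"
  shows "integrable lborel (\<lambda>t. dens t * (t ^ k * exp (- l * t)))"
proof -
  define r where "r = (\<rho> - l) / 2"
  define c where "c = (l + \<rho>) / 2"
  have "r < \<rho>" "c > 0" "-l = r - c" using assms(3) by (auto simp: r_def c_def field_simps)
  show ?thesis
  proof (rule integrable_dens_mult_bound[where h="\<lambda>t. t * exp (r * t)" and C="fact (k - 1) / c ^ (k - 1)"])
    show "integrable lborel (\<lambda>t. dens t * (t * exp (r * t)))"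
      using assms(1) \<open>r < \<rho>\<close> by (auto simp: exp_integrable_def)
    fix t :: real assume t: "0 < t"
    have "t ^ (k - 1) * exp (- c * t) \<le> (fact (k - 1) / c ^ (k - 1) * exp (c * t)) * exp (- c * t)"
      using power_le_fact_mult_exp[of t c "k - 1"] t \<open>c > 0\<close> by (intro mult_right_mono) auto
    also have "\<dots> = fact (k - 1) / c ^ (k - 1)" by (simp add: exp_minus field_simps)
    finally have "t * (t ^ (k - 1) * exp (- c * t)) * exp (r * t) \<le> t * (fact (k - 1) / c ^ (k - 1)) * exp (r * t)"
      using t by (intro mult_right_mono mult_left_mono) auto
    moreover have "t ^ k * exp (- l * t) = t * (t ^ (k - 1) * exp (- c * t)) * exp (r * t)"
      using \<open>1 \<le> k\<close> \<open>-l = r - c\<close>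
      by (simp add: power_eq_if mult_exp_exp algebra_simps)
    ultimately show "\<bar>t ^ k * exp (- l * t)\<bar> \<le> fact (k - 1) / c ^ (k - 1) * (t * exp (r * t))"
      using t by (simp add: mult_ac)
  qed measurable
qed

lemma integrable_levy_integral:
  assumes "exp_integrable \<rho>" "-\<rho> < l"
  shows "integrable lborel (\<lambda>t. dens t * (1 - exp (- l * t)))"
proof (cases "l \<ge> 0")
  case True
  show ?thesis
  proof (rule integrable_dens_mult_bound[OF integrable_dens_min, where C="max 1 l"])
    fix t :: real assume t: "0 < t"
    have abs_eq: "\<bar>1 - exp (- l * t)\<bar> = 1 - exp (- l * t)"
      using True t by (simp add: mult_nonneg_nonneg)
    show "\<bar>1 - exp (- l * t)\<bar> \<le> max 1 l * min 1 t"
    proof (cases "t \<le> 1")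
      case True
      have "1 - exp (- l * t) \<le> l * t" using exp_ge_add_one_self[of "- l * t"] by simp
      also have "\<dots> \<le> max 1 l * t" using t by (intro mult_right_mono) auto
      finally show ?thesis using True abs_eq by (simp add: min_def)
    next
      case False
      have "1 - exp (- l * t) \<le> 1" by simp
      then show ?thesis using False abs_eq by (simp add: min_def le_max_iff_disj)
    qed
  qed measurable
next
  case False
  show ?thesis
  proof (rule integrable_dens_mult_bound[where h="\<lambda>t. t * exp ((- l) * t)" and C="- l"])
    show "integrable lborel (\<lambda>t. dens t * (t * exp ((- l) * t)))"
      using assms(1)[unfolded exp_integrable_def, rule_format, of "- l"] assms(2) by simp
    fix t :: real assume t: "0 < t"
    have "exp x - 1 \<le> x * exp x" for x :: real
      using mult_left_mono[OF exp_ge_add_one_self[of "- x"], of "exp x"]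
      by (simp add: exp_minus algebra_simps)
    from this[of "- l * t"] have "exp (- l * t) - 1 \<le> (- l * t) * exp (- l * t)" by simp
    moreover have "1 \<le> exp (- l * t)" using False t by (simp add: mult_nonpos_nonneg)
    ultimately show "\<bar>1 - exp (- l * t)\<bar> \<le> - l * (t * exp ((- l) * t))" by simp
  qed measurable
qed

lemma has_real_derivative_dens_integral:
  assumes "exp_integrable \<rho>" "-\<rho> < l" "1 \<le> k"
    and integrable: "\<And>l'. -\<rho> < l' \<Longrightarrow> integrable lborel (\<lambda>t. dens t * f l' t)"
    and measurable: "(\<lambda>t. dens t * g l t) \<in> borel_measurable lborel"
    and deriv: "\<And>l t. ((\<lambda>l. f l t) has_real_derivative g l t) (at l)"
    and bound: "\<And>l t. 0 < t \<Longrightarrow> \<bar>g l t\<bar> \<le> t ^ k * exp (- l * t)"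
  shows "((\<lambda>l. integral\<^sup>L lborel (\<lambda>t. dens t * f l t))
           has_real_derivative integral\<^sup>L lborel (\<lambda>t. dens t * g l t)) (at l)"
proof -
  define \<eta> where "\<eta> = (l + \<rho>) / 2"
  have ball: "-\<rho> < l'" "l - \<eta> < l'" if "l' \<in> ball l \<eta>" for l'
  proof -
    have "l - l' < \<eta>"
      using that abs_ge_self[of "l - l'"] by (simp add: dist_real_def)
    then show "-\<rho> < l'" "l - \<eta> < l'"
      using \<open>-\<rho> < l\<close> by (auto simp: \<eta>_def field_simps)
  qed
  show ?thesis
  proof (rule has_real_derivative_integral_lborel[where w="\<lambda>t. dens t * (t ^ k * exp (- (l - \<eta>) * t))"])
    show "\<eta> > 0" using \<open>-\<rho> < l\<close> by (simp add: \<eta>_def)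
    show "integrable lborel (\<lambda>t. dens t * (t ^ k * exp (- (l - \<eta>) * t)))"
      using assms(1,2,3) by (intro integrable_laplace_moment) (auto simp: \<eta>_def field_simps)
    show "((\<lambda>l. dens t * f l t) has_real_derivative dens t * g l' t) (at l')" for l' t
      by (intro DERIV_cmult deriv)
    show "\<bar>dens t * g l' t\<bar> \<le> dens t * (t ^ k * exp (- (l - \<eta>) * t))" if "l' \<in> ball l \<eta>" for l' t
    proof (cases "t > 0")
      case True
      have "(l - \<eta>) * t \<le> l' * t"
        by (rule mult_right_mono) (use ball(2)[OF that] True in auto)
      then have "exp (- l' * t) \<le> exp (- (l - \<eta>) * t)" by (simp add: algebra_simps)
      have "\<bar>g l' t\<bar> \<le> t ^ k * exp (- l' * t)" using bound True .
      also have "\<dots> \<le> t ^ k * exp (- (l - \<eta>) * t)"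
        by (rule mult_left_mono[OF \<open>exp (- l' * t) \<le> exp (- (l - \<eta>) * t)\<close>]) (use True in simp)
      finally show ?thesis using dens_nonneg[of t] by (simp add: abs_mult mult_left_mono)
    qed (simp add: dens_eq_0)
  qed (use integrable ball measurable in auto)
qed

lemma has_real_derivative_laplace_moment:
  assumes "exp_integrable \<rho>" "1 \<le> k" "-\<rho> < l"
  shows "(laplace_moment k has_real_derivative - laplace_moment (Suc k) l) (at l)"
proof -
  have "((\<lambda>l. integral\<^sup>L lborel (\<lambda>t. dens t * (t ^ k * exp (- l * t))))
      has_real_derivative integral\<^sup>L lborel (\<lambda>t. dens t * - (t ^ Suc k * exp (- l * t)))) (at l)"
    using assms
    by (intro has_real_derivative_dens_integral[where k="Suc k"] integrable_laplace_moment)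
       (auto intro!: derivative_eq_intros simp: algebra_simps)
  then show ?thesis unfolding laplace_moment_def[abs_def] by simp
qed

lemma has_real_derivative_levy_integral:
  assumes "exp_integrable \<rho>" "-\<rho> < l"
  shows "(levy_integral has_real_derivative laplace_moment 1 l) (at l)"
proof -
  have "((\<lambda>l. integral\<^sup>L lborel (\<lambda>t. dens t * (1 - exp (- l * t))))
      has_real_derivative integral\<^sup>L lborel (\<lambda>t. dens t * (t ^ 1 * exp (- l * t)))) (at l)"
    using assms
    by (intro has_real_derivative_dens_integral[where k=1] integrable_levy_integral)
       (auto intro!: derivative_eq_intros simp: algebra_simps)
  then show ?thesis unfolding laplace_moment_def levy_integral_def[abs_def] by simp
qed

lemma laplace_moment_antimono:
  assumes "exp_integrable \<rho>" "1 \<le> k" "-\<rho> < l" "l \<le> l'"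
  shows "laplace_moment k l' \<le> laplace_moment k l"
  unfolding laplace_moment_def
proof (rule integral_mono)
  show "integrable lborel (\<lambda>t. dens t * (t ^ k * exp (- l' * t)))"
    "integrable lborel (\<lambda>t. dens t * (t ^ k * exp (- l * t)))"
    using integrable_laplace_moment[OF assms(1,2)] assms(3,4) by auto
  show "dens t * (t ^ k * exp (- l' * t)) \<le> dens t * (t ^ k * exp (- l * t))" for t
    using assms(4) dens_nonneg[of t]
    by (cases "t > 0") (auto simp: dens_eq_0 intro!: mult_left_mono mult_right_mono)
qed

lemma laplace_moment_nonneg: "0 \<le> laplace_moment k l"
  unfolding laplace_moment_def
proof (rule integral_nonneg_AE, rule AE_I2)
  show "0 \<le> dens t * (t ^ k * exp (- l * t))" for t
    by (cases "t > 0") (auto simp: dens_eq_0 dens_nonneg)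
qed

end

locale levy_khintchine = positive_levy_density +
  fixes \<phi> :: "real \<Rightarrow> real" and a b :: real
  assumes drift_nonneg: "0 \<le> b"
    and phi_representation: "\<And>l. 0 < l \<Longrightarrow>
      \<phi> l = a + b * l + (LINT t:{0<..}|lborel. (1 - exp (- l * t)) * \<mu> t)"
begin

definition lk_fun :: "real \<Rightarrow> real" where
  "lk_fun l = a + b * l + levy_integral l"

definition lk_deriv :: "nat \<Rightarrow> real \<Rightarrow> real" where
  "lk_deriv n l = (if n = 0 then lk_fun l
     else if n = 1 then b + laplace_moment 1 l
     else (-1) ^ (n - 1) * laplace_moment n l)"

lemma phi_eq_lk_fun: "0 < l \<Longrightarrow> \<phi> l = lk_fun l"
proof -
  assume "0 < l"
  have "(LINT t:{0<..}|lborel. (1 - exp (- l * t)) * \<mu> t) = levy_integral l"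
    unfolding set_lebesgue_integral_def levy_integral_def dens_def
    by (rule Bochner_Integration.integral_cong) (auto simp: indicator_def)
  then show ?thesis using phi_representation[OF \<open>0 < l\<close>] by (simp add: lk_fun_def)
qed

lemma has_real_derivative_lk_deriv:
  assumes "exp_integrable \<rho>" "-\<rho> < l"
  shows "(lk_deriv n has_real_derivative lk_deriv (Suc n) l) (at l)"
proof -
  consider "n = 0" | "n = 1" | "n \<ge> 2" by linarith
  then show ?thesis
  proof cases
    case 1
    have "(lk_fun has_real_derivative b + laplace_moment 1 l) (at l)"
      unfolding lk_fun_def[abs_def]
      by (auto intro!: derivative_eq_intros has_real_derivative_levy_integral[OF assms])
    then show ?thesis using 1 by (simp add: lk_deriv_def[abs_def])
  next
    case 2
    have "((\<lambda>l. b + laplace_moment 1 l) has_real_derivative 0 + - laplace_moment (Suc 1) l) (at l)"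
      by (intro derivative_intros has_real_derivative_laplace_moment[OF assms(1) _ assms(2)]) auto
    then show ?thesis using 2 by (simp add: lk_deriv_def[abs_def])
  next
    case 3
    have "((\<lambda>l. (-1) ^ (n - 1) * laplace_moment n l)
        has_real_derivative (-1) ^ (n - 1) * - laplace_moment (Suc n) l) (at l)"
      by (rule DERIV_cmult, rule has_real_derivative_laplace_moment[OF assms(1) _ assms(2)])
         (use 3 in auto)
    moreover have "(-1::real) ^ (n - 1) * - laplace_moment (Suc n) l = (-1) ^ n * laplace_moment (Suc n) l"
      using 3 by (cases n) auto
    moreover have "lk_deriv n = (\<lambda>l. (-1) ^ (n - 1) * laplace_moment n l)"
      using 3 by (auto simp: lk_deriv_def[abs_def])
    ultimately show ?thesis using 3 by (simp add: lk_deriv_def)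
  qed
qed

lemma higher_deriv_phi: "0 < l \<Longrightarrow> (deriv ^^ n) \<phi> l = lk_deriv n l"
proof (induction n arbitrary: l)
  case 0
  then show ?case by (simp add: phi_eq_lk_fun lk_deriv_def)
next
  case (Suc n)
  have "(lk_deriv n has_real_derivative lk_deriv (Suc n) l) (at l)"
    using has_real_derivative_lk_deriv[OF exp_integrable_0] Suc.prems by simp
  then have "((deriv ^^ n) \<phi> has_real_derivative lk_deriv (Suc n) l) (at l)"
    by (rule has_field_derivative_transform_within_open[where S="{0<..}"]) (use Suc in auto)
  then show ?case by (simp add: DERIV_imp_deriv)
qed

lemma deriv_at_0_phi:
  assumes "exp_integrable \<rho>" "0 < \<rho>"
  shows "deriv_at_0 \<phi> n = lk_deriv n 0"
proof -
  have "(lk_deriv n has_real_derivative lk_deriv (Suc n) 0) (at 0)"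
    using has_real_derivative_lk_deriv[OF assms(1)] assms(2) by simp
  then have "isCont (lk_deriv n) 0" by (rule DERIV_isCont)
  then have "(lk_deriv n \<longlongrightarrow> lk_deriv n 0) (at_right 0)"
    unfolding isCont_def by (rule tendsto_mono[OF at_le, rotated]) simp
  moreover have "eventually (\<lambda>l. lk_deriv n l = (deriv ^^ n) \<phi> l) (at_right 0)"
    using eventually_at_right_less[of 0] by eventually_elim (simp add: higher_deriv_phi)
  ultimately have "((deriv ^^ n) \<phi> \<longlongrightarrow> lk_deriv n 0) (at_right 0)"
    by (rule Lim_transform_eventually)
  then show ?thesis unfolding deriv_at_0_def by (intro tendsto_Lim) auto
qed

lemma laplace_moment_le_deriv_limit:
  assumes "((deriv ^^ Suc n) \<phi> \<longlongrightarrow> L) (at_right 0)" "0 < l"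
  shows "laplace_moment (Suc n) l \<le> (-1) ^ n * L"
proof (rule tendsto_lowerbound)
  show "((\<lambda>l. (-1) ^ n * (deriv ^^ Suc n) \<phi> l) \<longlongrightarrow> (-1) ^ n * L) (at_right 0)"
    by (intro tendsto_intros assms(1))
  have "eventually (\<lambda>l'. l' < l) (at_right 0)"
    using assms(2) by (auto simp: eventually_at_right_field intro!: exI[of _ l])
  then show "eventually (\<lambda>l'. laplace_moment (Suc n) l \<le> (-1) ^ n * (deriv ^^ Suc n) \<phi> l') (at_right 0)"
    using eventually_at_right_less[of 0]
  proof eventually_elim
    case (elim l')
    have "laplace_moment (Suc n) l \<le> laplace_moment (Suc n) l'"
      using laplace_moment_antimono[OF exp_integrable_0, of "Suc n" l' l] elim by simp
    also have "\<dots> \<le> (-1) ^ n * lk_deriv (Suc n) l'"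
      using drift_nonneg by (auto simp: lk_deriv_def)
    finally show ?case using higher_deriv_phi[of l' "Suc n"] elim by (simp del: funpow.simps)
  qed
qed simp

text \<open>Expanding \<open>e^(q t)\<close> into its power series turns \<open>\<integral> t e^((q - l) t) \<mu>(t) dt\<close> into a
  series of Laplace moments at \<open>l > 0\<close>, which the Taylor coefficients of \<open>\<phi>'\<close> at \<open>0+\<close> dominate.\<close>
lemma integrable_exp_moment_of_summable:
  assumes lim: "\<And>n. ((deriv ^^ Suc n) \<phi> \<longlongrightarrow> L n) (at_right 0)"
    and summable: "summable (\<lambda>n. L n / fact n * s ^ n)" and "s < - r" "0 \<le> r"
  shows "integrable lborel (\<lambda>t. dens t * (t * exp (r * t)))"
proof -
  define q where "q = - s"
  define l where "l = q - r"
  have "0 < l" "0 \<le> q" using assms(3,4) by (simp_all add: l_def q_def)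
  define f where "f i t = dens t * (t ^ Suc i * exp (- l * t)) * (q ^ i / fact i)" for i t
  have f_nonneg: "0 \<le> f i t" for i t
    using \<open>0 \<le> q\<close> by (cases "t > 0") (auto simp: f_def dens_eq_0 dens_nonneg)
  have f_integrable: "integrable lborel (f i)" for i
    unfolding f_def using integrable_laplace_moment[OF exp_integrable_0, of "Suc i" l] \<open>0 < l\<close> by simp
  have f_sums: "(\<lambda>i. f i t) sums (dens t * (t * exp (r * t)))" for t
  proof -
    have series: "(\<lambda>i. (dens t * (t * exp (- l * t))) * ((q * t) ^ i /\<^sub>R fact i))
        sums ((dens t * (t * exp (- l * t))) * exp (q * t))"
      by (intro sums_mult exp_converges)
    have terms: "(dens t * (t * exp (- l * t))) * ((q * t) ^ i /\<^sub>R fact i) = f i t" for i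
      by (simp add: f_def power_mult_distrib field_simps)
    have "exp (- l * t) * exp (q * t) = exp (r * t)"
      by (simp add: l_def mult_exp_exp algebra_simps)
    then have sum: "(dens t * (t * exp (- l * t))) * exp (q * t) = dens t * (t * exp (r * t))"
      by (metis mult.assoc)
    from series show ?thesis unfolding terms sum .
  qed
  have f_integral: "integral\<^sup>L lborel (f i) = laplace_moment (Suc i) l * (q ^ i / fact i)" for i
    unfolding f_def laplace_moment_def by simp
  have "summable (\<lambda>i. integral\<^sup>L lborel (f i))"
  proof (rule summable_comparison_test[OF _ summable], intro exI allI impI)
    fix n :: nat
    have nonneg: "0 \<le> laplace_moment (Suc n) l * (q ^ n / fact n)"
      using laplace_moment_nonneg[of "Suc n" l] \<open>0 \<le> q\<close> by simp
    have "norm (integral\<^sup>L lborel (f n)) = laplace_moment (Suc n) l * (q ^ n / fact n)"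
      unfolding f_integral by (simp only: real_norm_def abs_of_nonneg[OF nonneg])
    moreover have "laplace_moment (Suc n) l * (q ^ n / fact n) \<le> ((-1) ^ n * L n) * (q ^ n / fact n)"
      using laplace_moment_le_deriv_limit[OF lim \<open>0 < l\<close>] \<open>0 \<le> q\<close> by (intro mult_right_mono) auto
    moreover have "((-1) ^ n * L n) * (q ^ n / fact n) = L n / fact n * s ^ n"
      by (simp add: q_def power_minus')
    ultimately show "norm (integral\<^sup>L lborel (f n)) \<le> L n / fact n * s ^ n"
      by linarith
  qed
  then show ?thesis by (rule nonneg_series_integral(1)[OF f_integrable f_nonneg f_sums])
qed

lemma levy_integral_taylor_sums:
  assumes "exp_integrable \<rho>" "0 < \<rho>" "-\<rho> < y" "y \<le> 0"
  shows "(\<lambda>i. - ((-y) ^ Suc i / fact (Suc i)) * laplace_moment (Suc i) 0) sums levy_integral y"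
proof -
  define h where "h i t = (-y) ^ Suc i / fact (Suc i) * (dens t * (t ^ Suc i * exp (- 0 * t)))" for i t
  have h_integrable: "integrable lborel (h i)" for i
    unfolding h_def using integrable_laplace_moment[OF assms(1), of "Suc i" 0] assms(2) by simp
  have h_nonneg: "0 \<le> h i t" for i t
  proof -
    have "0 \<le> (-y) ^ Suc i / fact (Suc i)" using assms(4) by (intro divide_nonneg_pos zero_le_power) auto
    moreover have "0 \<le> dens t * (t ^ Suc i * exp (- 0 * t))"
      using dens_nonneg[of t] by (cases "t > 0") (simp_all add: dens_eq_0)
    ultimately show ?thesis unfolding h_def by (rule mult_nonneg_nonneg)
  qed
  have h_sums: "(\<lambda>i. h i t) sums (- (dens t * (1 - exp (- y * t))))" for t
  proof -
    have "(\<lambda>n. (- y * t) ^ Suc n /\<^sub>R fact (Suc n)) sums (exp (- y * t) - 1)"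
      using exp_converges[of "- y * t"] by (subst sums_Suc_iff) simp
    then have "(\<lambda>n. dens t * ((- y * t) ^ Suc n /\<^sub>R fact (Suc n))) sums (dens t * (exp (- y * t) - 1))"
      by (rule sums_mult)
    moreover have "dens t * ((- y * t) ^ Suc n /\<^sub>R fact (Suc n)) = h n t" for n
      by (simp add: h_def power_minus' power_mult_distrib divide_inverse mult_ac)
    moreover have "dens t * (exp (- y * t) - 1) = - (dens t * (1 - exp (- y * t)))"
      by (simp add: algebra_simps)
    ultimately show ?thesis by simp
  qed
  have "integrable lborel (\<lambda>t. - (dens t * (1 - exp (- y * t))))"
    using integrable_levy_integral[OF assms(1,3)] by simp
  then have "summable (\<lambda>i. integral\<^sup>L lborel (h i))"
    by (rule summable_integral_of_nonneg_sums[OF h_integrable h_nonneg h_sums])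
  then have "(\<lambda>i. integral\<^sup>L lborel (h i)) sums integral\<^sup>L lborel (\<lambda>t. - (dens t * (1 - exp (- y * t))))"
    by (rule nonneg_series_integral(2)[OF h_integrable h_nonneg h_sums])
  moreover have "integral\<^sup>L lborel (h i) = (-y) ^ Suc i / fact (Suc i) * laplace_moment (Suc i) 0" for i
    unfolding h_def laplace_moment_def by simp
  ultimately have "(\<lambda>i. (-y) ^ Suc i / fact (Suc i) * laplace_moment (Suc i) 0) sums - levy_integral y"
    by (simp add: levy_integral_def)
  from sums_minus[OF this] show ?thesis by simp
qed

lemma lk_fun_taylor_sums:
  assumes "exp_integrable \<rho>" "0 < \<rho>" "-\<rho> < y" "y \<le> 0"
  shows "(\<lambda>n. lk_deriv n 0 / fact n * y ^ n) sums lk_fun y"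
proof -
  have "(\<lambda>i. (if i = 0 then b * y else 0) + - ((-y) ^ Suc i / fact (Suc i)) * laplace_moment (Suc i) 0)
      sums (b * y + levy_integral y)"
    by (intro sums_add levy_integral_taylor_sums[OF assms]) (use sums_single[of 0 "\<lambda>_. b * y"] in simp)
  moreover have "(if i = 0 then b * y else 0) + - ((-y) ^ Suc i / fact (Suc i)) * laplace_moment (Suc i) 0
      = lk_deriv (Suc i) 0 / fact (Suc i) * y ^ Suc i" for i
    by (cases i) (auto simp: lk_deriv_def power_minus' field_simps)
  ultimately have "(\<lambda>i. lk_deriv (Suc i) 0 / fact (Suc i) * y ^ Suc i) sums (b * y + levy_integral y)"
    by simp
  then have "(\<lambda>n. lk_deriv n 0 / fact n * y ^ n) sums (b * y + levy_integral y + lk_deriv 0 0 / fact 0 * y ^ 0)"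
    by (subst (asm) sums_Suc_iff)
  moreover have "b * y + levy_integral y + lk_deriv 0 0 / fact 0 * y ^ 0 = lk_fun y"
    by (simp add: lk_deriv_def lk_fun_def levy_integral_def)
  ultimately show ?thesis by simp
qed

lemma omega0_deriv_imp_exp_integrable:
  assumes "ereal \<beta> = - omega0 (deriv \<phi>)"
  shows "0 \<le> \<beta>" "exp_integrable \<beta>"
proof -
  have "0 \<le> \<beta> \<and> exp_integrable \<beta>"
  proof (cases "all_derivs_finite_at_0 (deriv \<phi>)")
    case False
    then show ?thesis using assms exp_integrable_0 by (simp add: omega0_def zero_ereal_def)
  next
    case True
    define L where "L n = deriv_at_0 (deriv \<phi>) n" for n
    have lim: "((deriv ^^ Suc n) \<phi> \<longlongrightarrow> L n) (at_right 0)" for n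
      using tendsto_deriv_at_0[OF True, of n] unfolding L_def
      by (simp add: funpow_Suc_right del: funpow.simps)
    define S where "S = {s. summable (\<lambda>n. L n / fact n * s ^ n)}"
    have "omega0 (deriv \<phi>) = Inf (ereal ` S)" using True by (simp add: omega0_def S_def L_def)
    then have Inf_S: "Inf (ereal ` S) = ereal (- \<beta>)"
      using assms by (metis ereal_uminus_uminus uminus_ereal.simps(1))
    have "0 \<in> S" unfolding S_def using powser_sums_zero[of "\<lambda>n. L n / fact n"] by (auto simp: sums_iff)
    then have "Inf (ereal ` S) \<le> 0" by (metis Inf_lower image_eqI zero_ereal_def)
    then have "0 \<le> \<beta>" using Inf_S by (simp add: zero_ereal_def)
    moreover have "exp_integrable \<beta>" unfolding exp_integrable_def
    proof (intro allI impI)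
      fix r assume "r < \<beta>"
      show "integrable lborel (\<lambda>t. dens t * (t * exp (r * t)))"
      proof (cases "r < 0")
        case True
        then show ?thesis using exp_integrable_0 by (auto simp: exp_integrable_def)
      next
        case False
        have "Inf (ereal ` S) < ereal (- r)" using Inf_S \<open>r < \<beta>\<close> by simp
        then obtain s where "s \<in> S" "s < - r" by (auto simp: Inf_less_iff)
        then show ?thesis using integrable_exp_moment_of_summable[OF lim, of s r] False
          by (auto simp: S_def)
      qed
    qed
    ultimately show ?thesis ..
  qed
  then show "0 \<le> \<beta>" "exp_integrable \<beta>" by auto
qed

lemma phi_ext_eq_lk_fun:
  assumes "0 \<le> \<beta>" "exp_integrable \<beta>" "-\<beta> < y"
  shows "phi_ext \<phi> \<beta> y = lk_fun y"
proof (cases "y > 0 \<or> \<beta> = 0")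
  case True
  then show ?thesis using assms by (auto simp: phi_ext_def phi_eq_lk_fun)
next
  case False
  then have "0 < \<beta>" "y \<le> 0" using assms(1) by auto
  then have "phi_ext \<phi> \<beta> y = (\<Sum>n. lk_deriv n 0 / fact n * y ^ n)"
    by (simp add: phi_ext_def deriv_at_0_phi[OF assms(2)])
  also have "\<dots> = lk_fun y"
    using lk_fun_taylor_sums[OF assms(2) \<open>0 < \<beta>\<close> assms(3) \<open>y \<le> 0\<close>] by (simp add: sums_iff)
  finally show ?thesis .
qed

lemma deriv2_phi_ext:
  assumes "0 \<le> \<beta>" "exp_integrable \<beta>" "-\<beta> < x"
  shows "deriv (deriv (phi_ext \<phi> \<beta>)) x = - laplace_moment 2 x"
proof -
  have deriv_phi_ext: "deriv (phi_ext \<phi> \<beta>) z = lk_deriv 1 z" if "-\<beta> < z" for z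
  proof -
    have "(lk_fun has_real_derivative lk_deriv 1 z) (at z)"
      using has_real_derivative_lk_deriv[OF assms(2) that, of 0] by (simp add: lk_deriv_def[abs_def])
    then have "(phi_ext \<phi> \<beta> has_real_derivative lk_deriv 1 z) (at z)"
      by (rule has_field_derivative_transform_within_open[where S="{-\<beta><..}"])
         (use phi_ext_eq_lk_fun[OF assms(1,2)] that in auto)
    then show ?thesis by (rule DERIV_imp_deriv)
  qed
  have "(lk_deriv 1 has_real_derivative lk_deriv 2 x) (at x)"
    using has_real_derivative_lk_deriv[OF assms(2,3), of 1] by (simp add: numeral_2_eq_2)
  then have "(deriv (phi_ext \<phi> \<beta>) has_real_derivative lk_deriv 2 x) (at x)"
    by (rule has_field_derivative_transform_within_open[where S="{-\<beta><..}"])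
       (use deriv_phi_ext assms(3) in auto)
  then have "deriv (deriv (phi_ext \<phi> \<beta>)) x = lk_deriv 2 x" by (rule DERIV_imp_deriv)
  then show ?thesis by (simp add: lk_deriv_def)
qed

end

locale exp_monotone_levy_density = positive_levy_density +
  fixes \<beta> :: real
  assumes exp_integrable_beta: "exp_integrable \<beta>"
    and exp_density_antimono: "\<And>s t. 0 < s \<Longrightarrow> s \<le> t \<Longrightarrow> exp (\<beta> * t) * \<mu> t \<le> exp (\<beta> * s) * \<mu> s"
begin

text \<open>Restrict the integral to \<open>(t/2, t]\<close>, where \<open>e^(\<beta> s) \<mu>(s) \<ge> e^(\<beta> t) \<mu>(t)\<close>.\<close>
lemma laplace_moment_2_lower:
  assumes "0 < t"
  shows "exp (\<beta> * t) * \<mu> t * t ^ 3 / (8 * exp 1) \<le> laplace_moment 2 (1 / t - \<beta>)"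
proof -
  define c where "c = (t / 2) ^ 2 * exp (-1) * (exp (\<beta> * t) * \<mu> t)"
  have "integral\<^sup>L lborel (\<lambda>s. indicator {t/2<..t} s * c) \<le> laplace_moment 2 (1 / t - \<beta>)"
    unfolding laplace_moment_def
  proof (rule integral_mono)
    show "integrable lborel (\<lambda>s. indicator {t/2<..t} s * c)"
      using integrable_indicator[of "{t/2<..t}" lborel c] assms by simp
    show "integrable lborel (\<lambda>s. dens s * (s ^ 2 * exp (- (1 / t - \<beta>) * s)))"
      using assms by (intro integrable_laplace_moment[OF exp_integrable_beta]) auto
    fix s :: real
    show "indicator {t/2<..t} s * c \<le> dens s * (s ^ 2 * exp (- (1 / t - \<beta>) * s))"
    proof (cases "s \<in> {t/2<..t}")
      case True
      then have s: "t / 2 < s" "s \<le> t" "0 < s" using assms by auto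
      have "(t / 2) ^ 2 \<le> s ^ 2" using s assms by (intro power_mono) auto
      then have square: "(t / 2) ^ 2 * exp (-1) \<le> s ^ 2 * exp (-1)" by simp
      have antimono: "exp (\<beta> * t) * \<mu> t \<le> exp (\<beta> * s) * \<mu> s"
        using exp_density_antimono s by simp
      have "c \<le> s ^ 2 * exp (-1) * (exp (\<beta> * s) * \<mu> s)"
        unfolding c_def using density_pos[OF assms] by (intro mult_mono[OF square antimono]) auto
      also have "\<dots> = s ^ 2 * (exp (-1) * exp (\<beta> * s)) * \<mu> s" by (simp only: mult.assoc)
      also have "\<dots> \<le> s ^ 2 * exp (- (1 / t - \<beta>) * s) * \<mu> s"
      proof -
        have "s / t \<le> 1" using s assms by simp
        then have "-1 + \<beta> * s \<le> - (1 / t - \<beta>) * s" by (simp add: algebra_simps)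
        then have "exp (-1) * exp (\<beta> * s) \<le> exp (- (1 / t - \<beta>) * s)"
          by (simp add: exp_add[symmetric])
        then show ?thesis using density_pos[OF s(3)] by (intro mult_right_mono mult_left_mono) auto
      qed
      finally show ?thesis using True s by (simp add: dens_def mult_ac)
    next
      case False
      then show ?thesis
        using dens_nonneg[of s] by simp
    qed
  qed
  moreover have "integral\<^sup>L lborel (\<lambda>s. indicator {t/2<..t} s * c) = c * (t / 2)"
    using assms by simp
  moreover have "c * (t / 2) = exp (\<beta> * t) * \<mu> t * t ^ 3 / (8 * exp 1)"
    by (simp add: c_def exp_minus field_simps power2_eq_square power3_eq_cube)
  ultimately show ?thesis by linarith
qed

lemma laplace_moment_2_pos:
  assumes "0 < l"
  shows "0 < laplace_moment 2 (l - \<beta>)"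
proof -
  have "0 < exp (\<beta> * (1 / l)) * \<mu> (1 / l) * (1 / l) ^ 3 / (8 * exp 1)"
    using assms density_pos[of "1 / l"] by simp
  also have "\<dots> \<le> laplace_moment 2 (l - \<beta>)"
    using laplace_moment_2_lower[of "1 / l"] assms by simp
  finally show ?thesis .
qed

lemma density_upper:
  assumes "0 < t"
  shows "\<mu> t \<le> 8 * exp 1 * laplace_moment 2 (1 / t - \<beta>) * exp (- \<beta> * t) / t ^ 3"
  using laplace_moment_2_lower[OF assms] assms
  by (simp add: field_simps exp_minus)

text \<open>Split at \<open>r\<close>: below \<open>r\<close> compare the kernels at \<open>l\<close> and \<open>x l\<close>; above \<open>r\<close> bound
  \<open>e^(\<beta> s) \<mu>(s)\<close> by its value at \<open>r\<close>, leaving \<open>s^2 e^(-l s)\<close>, which is \<open>2 / l^3\<close> times an Erlang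
  density.\<close>
lemma laplace_kernel_2_split:
  assumes "0 < l" "0 < r" "1 \<le> x"
  shows "dens s * (s ^ 2 * exp (- (l - \<beta>) * s))
    \<le> exp ((x - 1) * (l * r)) * (dens s * (s ^ 2 * exp (- (x * l - \<beta>) * s)))
      + exp (\<beta> * r) * \<mu> r * 2 / l ^ 3 * erlang_density 2 l s"
    (is "_ \<le> ?E * _ + ?C * _")
proof -
  have parts: "0 \<le> ?E * (dens s * (s ^ 2 * exp (- (x * l - \<beta>) * s)))" "0 \<le> ?C * erlang_density 2 l s"
    using dens_nonneg[of s] density_pos[OF assms(2)] assms(1) by simp_all
  consider "s \<le> 0" | "0 < s" "s \<le> r" | "r < s" by fastforce
  then show ?thesis
  proof cases
    case 1
    then show ?thesis using parts by (simp add: dens_eq_0)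
  next
    case 2
    have "(x - 1) * (l * s) \<le> (x - 1) * (l * r)" using assms 2 by (intro mult_left_mono) auto
    then have kernel: "exp (- (l - \<beta>) * s) \<le> ?E * exp (- (x * l - \<beta>) * s)"
      by (simp add: mult_exp_exp algebra_simps)
    have "dens s * (s ^ 2 * exp (- (l - \<beta>) * s)) \<le> ?E * (dens s * (s ^ 2 * exp (- (x * l - \<beta>) * s)))"
      using mult_left_mono[OF kernel, of "dens s * s ^ 2"] dens_nonneg[of s] by (simp add: mult_ac)
    then show ?thesis using parts by simp
  next
    case 3
    then have "0 < s" using assms(2) by simp
    have "exp (- (l - \<beta>) * s) = exp (- l * s) * exp (\<beta> * s)"
      by (simp add: mult_exp_exp algebra_simps)
    then have "dens s * (s ^ 2 * exp (- (l - \<beta>) * s)) = (s ^ 2 * exp (- l * s)) * (exp (\<beta> * s) * \<mu> s)"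
      using \<open>0 < s\<close> by (simp add: dens_def mult_ac)
    also have "\<dots> \<le> (s ^ 2 * exp (- l * s)) * (exp (\<beta> * r) * \<mu> r)"
      using exp_density_antimono[of r s] assms(2) 3 by (intro mult_left_mono) auto
    also have "\<dots> = ?C * erlang_density 2 l s"
      using \<open>0 < s\<close> assms(1)
      by (simp add: erlang_density_def power3_eq_cube power2_eq_square field_simps)
    finally show ?thesis using parts by simp
  qed
qed

lemma laplace_moment_2_split:
  assumes "0 < l" "0 < r" "1 \<le> x"
  shows "laplace_moment 2 (l - \<beta>)
    \<le> exp ((x - 1) * (l * r)) * laplace_moment 2 (x * l - \<beta>) + exp (\<beta> * r) * \<mu> r * 2 / l ^ 3"
proof -
  have integrable_x: "integrable lborel (\<lambda>s. dens s * (s ^ 2 * exp (- (x * l - \<beta>) * s)))"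
    using assms by (intro integrable_laplace_moment[OF exp_integrable_beta]) auto
  have "laplace_moment 2 (l - \<beta>) \<le> integral\<^sup>L lborel (\<lambda>s.
      exp ((x - 1) * (l * r)) * (dens s * (s ^ 2 * exp (- (x * l - \<beta>) * s)))
      + exp (\<beta> * r) * \<mu> r * 2 / l ^ 3 * erlang_density 2 l s)"
    unfolding laplace_moment_def
  proof (rule integral_mono)
    show "integrable lborel (\<lambda>s. dens s * (s ^ 2 * exp (- (l - \<beta>) * s)))"
      using assms by (intro integrable_laplace_moment[OF exp_integrable_beta]) auto
  qed (use integrable_x erlang_density_2_integral(1)[OF assms(1)] laplace_kernel_2_split[OF assms] in auto)
  also have "\<dots> = exp ((x - 1) * (l * r)) * laplace_moment 2 (x * l - \<beta>) + exp (\<beta> * r) * \<mu> r * 2 / l ^ 3"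
    unfolding laplace_moment_def using integrable_x erlang_density_2_integral[OF assms(1)] by simp
  finally show ?thesis .
qed

lemma laplace_moment_2_upper:
  assumes "0 < l" "0 < t" "1 \<le> x" "l * t \<le> 1" "exp ((x - 1) * (l * t)) \<le> 2"
    and ratio: "laplace_moment 2 (x * l - \<beta>) \<le> laplace_moment 2 (l - \<beta>) / 4"
  shows "laplace_moment 2 (1 / t - \<beta>) \<le> 4 * exp (\<beta> * t) * \<mu> t / l ^ 3"
proof -
  have "exp ((x - 1) * (l * t)) * laplace_moment 2 (x * l - \<beta>) \<le> 2 * (laplace_moment 2 (l - \<beta>) / 4)"
    using assms(5) ratio laplace_moment_nonneg by (intro mult_mono) auto
  then have "laplace_moment 2 (l - \<beta>) \<le> 2 * (exp (\<beta> * t) * \<mu> t * 2 / l ^ 3)"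
    using laplace_moment_2_split[OF assms(1,2,3)] by linarith
  moreover have "2 * (exp (\<beta> * t) * \<mu> t * 2 / l ^ 3) = 4 * exp (\<beta> * t) * \<mu> t / l ^ 3"
    by simp
  moreover have "laplace_moment 2 (1 / t - \<beta>) \<le> laplace_moment 2 (l - \<beta>)"
    using assms(1,2,4) by (intro laplace_moment_antimono[OF exp_integrable_beta]) (auto simp: field_simps)
  ultimately show ?thesis by linarith
qed

lemma density_lower:
  assumes "0 < \<theta>" "0 < \<gamma>"
    and ratio: "\<And>x l. 1 \<le> x \<Longrightarrow> \<Lambda>1 < l \<Longrightarrow> ereal l < \<Lambda>2 \<Longrightarrow>
      laplace_moment 2 (l * x - \<beta>) / laplace_moment 2 (l - \<beta>) \<le> \<theta> * x powr (- \<gamma>)"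
  shows "\<exists>c>0. \<exists>\<delta>. 0 < \<delta> \<and> \<delta> < 1 \<and>
    (\<forall>t. 0 < t \<and> ereal \<delta> < ereal t * \<Lambda>2 \<and> t * \<Lambda>1 < \<delta> \<longrightarrow>
       c * laplace_moment 2 (1 / t - \<beta>) * exp (- \<beta> * t) / t ^ 3 \<le> \<mu> t)"
proof -
  obtain x where "1 \<le> x" and x: "\<theta> * x powr (- \<gamma>) \<le> 1 / 4"
    using exists_powr_threshold[OF assms(1,2)] by blast
  define \<delta> where "\<delta> = ln 2 / (2 * x)"
  have "0 < \<delta>" using \<open>1 \<le> x\<close> by (simp add: \<delta>_def)
  have "\<delta> \<le> 1 / 2"
    using ln_le_minus_one[of 2] \<open>1 \<le> x\<close> by (simp add: \<delta>_def field_simps)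
  have "(x - 1) * \<delta> \<le> x * \<delta>" using \<open>0 < \<delta>\<close> by (simp add: algebra_simps)
  also have "x * \<delta> = ln 2 / 2" using \<open>1 \<le> x\<close> by (simp add: \<delta>_def field_simps)
  also have "\<dots> \<le> ln 2" using ln_gt_zero[of 2] by simp
  finally have "exp ((x - 1) * \<delta>) \<le> exp (ln 2)" by (simp only: exp_le_cancel_iff)
  then have exp_le_2: "exp ((x - 1) * \<delta>) \<le> 2" by simp
  have "\<forall>t. 0 < t \<and> ereal \<delta> < ereal t * \<Lambda>2 \<and> t * \<Lambda>1 < \<delta> \<longrightarrow>
      \<delta> ^ 3 / 4 * laplace_moment 2 (1 / t - \<beta>) * exp (- \<beta> * t) / t ^ 3 \<le> \<mu> t"
  proof (intro allI impI, elim conjE)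
    fix t assume t: "0 < t" "ereal \<delta> < ereal t * \<Lambda>2" "t * \<Lambda>1 < \<delta>"
    define l where "l = \<delta> / t"
    have "0 < l" "l * t = \<delta>" using \<open>0 < \<delta>\<close> t(1) by (simp_all add: l_def)
    have "\<Lambda>1 < l" using t by (simp add: l_def pos_less_divide_eq mult.commute)
    moreover have "ereal l < \<Lambda>2"
      using t by (cases \<Lambda>2) (auto simp: l_def pos_divide_less_eq mult.commute)
    ultimately have "laplace_moment 2 (l * x - \<beta>) / laplace_moment 2 (l - \<beta>) \<le> \<theta> * x powr (- \<gamma>)"
      by (rule ratio[OF \<open>1 \<le> x\<close>])
    then have "laplace_moment 2 (l * x - \<beta>) / laplace_moment 2 (l - \<beta>) \<le> 1 / 4"
      using x by linarith
    then have "laplace_moment 2 (x * l - \<beta>) \<le> laplace_moment 2 (l - \<beta>) / 4"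
      using laplace_moment_2_pos[OF \<open>0 < l\<close>] by (simp add: divide_le_eq mult.commute)
    then have "laplace_moment 2 (1 / t - \<beta>) \<le> 4 * exp (\<beta> * t) * \<mu> t / l ^ 3"
      using laplace_moment_2_upper[OF \<open>0 < l\<close> t(1) \<open>1 \<le> x\<close>] \<open>l * t = \<delta>\<close> \<open>\<delta> \<le> 1 / 2\<close> exp_le_2
      by simp
    then show "\<delta> ^ 3 / 4 * laplace_moment 2 (1 / t - \<beta>) * exp (- \<beta> * t) / t ^ 3 \<le> \<mu> t"
      using t(1) \<open>0 < \<delta>\<close> by (simp add: l_def field_simps exp_minus power_divide)
  qed
  moreover have "0 < \<delta> ^ 3 / 4" "\<delta> < 1" using \<open>0 < \<delta>\<close> \<open>\<delta> \<le> 1 / 2\<close> by auto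
  ultimately show ?thesis using \<open>0 < \<delta>\<close> by blast
qed

end

locale levy_khintchine_exp_monotone =
  levy_khintchine \<mu> \<phi> a b + exp_monotone_levy_density \<mu> \<beta> for \<mu> \<phi> a b \<beta> +
  assumes beta_nonneg: "0 \<le> \<beta>"
begin

lemma deriv2_phi_ext_eq: "0 < l \<Longrightarrow> deriv (deriv (phi_ext \<phi> \<beta>)) (l - \<beta>) = - laplace_moment 2 (l - \<beta>)"
  using deriv2_phi_ext[OF beta_nonneg exp_integrable_beta] by simp

lemma scaled_deriv2_phi_ext_eq:
  assumes "0 < t"
  shows "- c * t powr (-3) * deriv (deriv (phi_ext \<phi> \<beta>)) (1 / t - \<beta>) * exp (- \<beta> * t)
    = c * laplace_moment 2 (1 / t - \<beta>) * exp (- \<beta> * t) / t ^ 3"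
proof -
  have "deriv (deriv (phi_ext \<phi> \<beta>)) (1 / t - \<beta>) = - laplace_moment 2 (1 / t - \<beta>)"
    using assms by (intro deriv2_phi_ext_eq) simp
  moreover have "t powr (-3) = 1 / t ^ 3"
    using assms by (simp add: powr_minus powr_numeral divide_inverse)
  ultimately show ?thesis by simp
qed

lemma density_upper_deriv2:
  "\<exists>c1>0. \<forall>t>0. \<mu> t \<le> - c1 * t powr (-3) * deriv (deriv (phi_ext \<phi> \<beta>)) (1 / t - \<beta>) * exp (- \<beta> * t)"
proof (intro exI[of _ "8 * exp 1"] conjI allI impI)
  fix t :: real assume "0 < t"
  show "\<mu> t \<le> - (8 * exp 1) * t powr (-3) * deriv (deriv (phi_ext \<phi> \<beta>)) (1 / t - \<beta>) * exp (- \<beta> * t)"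
    unfolding scaled_deriv2_phi_ext_eq[OF \<open>0 < t\<close>] using density_upper[OF \<open>0 < t\<close>] .
qed simp

lemma density_lower_deriv2:
  assumes "0 < \<theta>" "0 \<le> \<Lambda>1" "0 < \<gamma>"
    and ratio: "\<forall>x\<ge>1. \<forall>l. \<Lambda>1 < l \<and> ereal l < \<Lambda>2 \<longrightarrow>
      deriv (deriv (phi_ext \<phi> \<beta>)) (l * x - \<beta>) / deriv (deriv (phi_ext \<phi> \<beta>)) (l - \<beta>) \<le> \<theta> * x powr (- \<gamma>)"
  shows "\<exists>c2>0. \<exists>\<delta>. 0 < \<delta> \<and> \<delta> < 1 \<and>
    (\<forall>t. 0 < t \<and> ereal \<delta> < ereal t * \<Lambda>2 \<and> t * \<Lambda>1 < \<delta> \<longrightarrow>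
       \<mu> t \<ge> - c2 * t powr (-3) * deriv (deriv (phi_ext \<phi> \<beta>)) (1 / t - \<beta>) * exp (- \<beta> * t))"
proof -
  have ratio_laplace: "laplace_moment 2 (l * x - \<beta>) / laplace_moment 2 (l - \<beta>) \<le> \<theta> * x powr (- \<gamma>)"
    if "1 \<le> x" "\<Lambda>1 < l" "ereal l < \<Lambda>2" for x l
  proof -
    have "0 < l" "0 < l * x" using that assms(2) by auto
    have "deriv (deriv (phi_ext \<phi> \<beta>)) (l * x - \<beta>) / deriv (deriv (phi_ext \<phi> \<beta>)) (l - \<beta>)
        \<le> \<theta> * x powr (- \<gamma>)"
      using ratio that by blast
    then show ?thesis
      unfolding deriv2_phi_ext_eq[OF \<open>0 < l\<close>] deriv2_phi_ext_eq[OF \<open>0 < l * x\<close>] by simp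
  qed
  obtain c \<delta> where c: "0 < c" "0 < \<delta>" "\<delta> < 1" and bound: "\<And>t. 0 < t \<Longrightarrow>
      ereal \<delta> < ereal t * \<Lambda>2 \<Longrightarrow> t * \<Lambda>1 < \<delta> \<Longrightarrow>
      c * laplace_moment 2 (1 / t - \<beta>) * exp (- \<beta> * t) / t ^ 3 \<le> \<mu> t"
    using density_lower[OF assms(1,3) ratio_laplace] by blast
  show ?thesis
  proof (rule exI[of _ c], intro conjI exI[of _ \<delta>] allI impI c, elim conjE)
    fix t assume t: "0 < t" "ereal \<delta> < ereal t * \<Lambda>2" "t * \<Lambda>1 < \<delta>"
    show "- c * t powr (-3) * deriv (deriv (phi_ext \<phi> \<beta>)) (1 / t - \<beta>) * exp (- \<beta> * t) \<le> \<mu> t"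
      unfolding scaled_deriv2_phi_ext_eq[OF t(1)] using bound t by blast
  qed
qed

end

theorem corollary4p1:
  fixes \<phi> \<mu> :: "real \<Rightarrow> real" and \<beta> :: real
  assumes bf: "bernstein_function \<phi>"
    and beta: "ereal \<beta> = - omega0 (deriv \<phi>)"
    and dens: "levy_density \<phi> \<mu>"
    and pos: "\<forall>t>0. \<mu> t > 0"
    and noninc: "\<forall>s t. 0 < s \<and> s \<le> t \<longrightarrow> exp (\<beta> * t) * \<mu> t \<le> exp (\<beta> * s) * \<mu> s"
  shows "(\<exists>c1>0. \<forall>t>0.
            \<mu> t \<le> - c1 * t powr (-3) * deriv (deriv (phi_ext \<phi> \<beta>)) (1 / t - \<beta>) * exp (- \<beta> * t))
       \<and> (\<forall>\<theta> \<Lambda>1 (\<Lambda>2::ereal) \<gamma>.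
            \<theta> > 0 \<and> 0 \<le> \<Lambda>1 \<and> ereal \<Lambda>1 < \<Lambda>2 \<and> \<gamma> > 0 \<and>
            (\<forall>x\<ge>1. \<forall>l. \<Lambda>1 < l \<and> ereal l < \<Lambda>2 \<longrightarrow>
               deriv (deriv (phi_ext \<phi> \<beta>)) (l * x - \<beta>) / deriv (deriv (phi_ext \<phi> \<beta>)) (l - \<beta>)
                 \<le> \<theta> * x powr (- \<gamma>))
          \<longrightarrow> (\<exists>c2>0. \<exists>\<delta>. 0 < \<delta> \<and> \<delta> < 1 \<and>
                (\<forall>t. 0 < t \<and> ereal \<delta> < ereal t * \<Lambda>2 \<and> t * \<Lambda>1 < \<delta> \<longrightarrow>
                   \<mu> t \<ge> - c2 * t powr (-3) * deriv (deriv (phi_ext \<phi> \<beta>)) (1 / t - \<beta>) * exp (- \<beta> * t))))"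
proof -
  obtain a b where "0 \<le> b" and "set_integrable lborel {0<..} (\<lambda>t. min 1 t * \<mu> t)"
    and "\<forall>l>0. \<phi> l = a + b * l + (LINT t:{0<..}|lborel. (1 - exp (- l * t)) * \<mu> t)"
    using dens unfolding levy_density_def by blast
  then interpret levy_khintchine \<mu> \<phi> a b
    using pos by unfold_locales auto
  interpret levy_khintchine_exp_monotone \<mu> \<phi> a b \<beta>
    using omega0_deriv_imp_exp_integrable[OF beta] noninc by unfold_locales auto
  show ?thesis
    by (intro conjI allI impI density_upper_deriv2, elim conjE) (rule density_lower_deriv2)
qed

end
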